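(* Let $X$ be a Banach space, $f_1,f_2:X\to\mathbb{R}\cup\{+\infty\}$ convex functions, $\bar x\in\operatorname{dom} f_1\cap\operatorname{dom} f_2$, and suppose $0\in\partial f_1(\bar x)+\partial f_2(\bar x)$. Then the pair $\{f_1,f_2\}$ is uniformly lower semicontinuous on $X$, i.e., $\inf_{x\in X}(f_1+f_2)(x)\le \liminf_{\|x-u\|\to 0}\big(f_1(x)+f_2(u)\big)$.
   Context: $\operatorname{dom} f=\{x: f(x)<+\infty\}$. The (Fenchel) subdifferential of $f$ at $\bar x\in\operatorname{dom} f$ is $\partial f(\bar x)=\{x^*\in X^*: f(x)-f(\bar x)-\langle x^*,x-\bar x\rangle\ge0\ \forall x\in X\}$. Here $\liminf_{\|x-u\|\to0}(f_1(x)+f_2(u)):=\lim_{\delta\downarrow0}\inf\{f_1(x)+f_2(u): x,u\in X,\ \|x-u\|<\delta\}$; this is the uniform infimum $\Lambda_X(\{f_1,f_2\})$ of the pair on $X$, and uniform lower semicontinuity on $X$ means $\inf_X(f_1+f_2)\le\Lambda_X(\{f_1,f_2\})$. *)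

theory Defs
  imports "HOL-Analysis.Analysis"
begin

text \<open>Extended-real-valued functions f : X -> R \<union> {+\<infinity>} are modelled as
  f :: 'a \<Rightarrow> ereal with f never taking the value -\<infinity>.\<close>

definition efun_dom :: "('a \<Rightarrow> ereal) \<Rightarrow> 'a set" where
  "efun_dom f = {x. f x < \<infinity>}"

text \<open>Convexity of an extended-real-valued function (ereal arithmetic, 0 * \<infinity> = 0).\<close>
definition ext_convex :: "('a::real_vector \<Rightarrow> ereal) \<Rightarrow> bool" where
  "ext_convex f \<longleftrightarrow> (\<forall>x y. \<forall>t::real. 0 \<le> t \<and> t \<le> 1 \<longrightarrow>
      f ((1 - t) *\<^sub>R x + t *\<^sub>R y) \<le> ereal (1 - t) * f x + ereal t * f y)"

definition fenchel_subdiff :: "('a::real_normed_vector \<Rightarrow> ereal) \<Rightarrow> 'a \<Rightarrow> ('a \<Rightarrow>\<^sub>L real) set" where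
  "fenchel_subdiff f xb = {xs. \<forall>x. f x - f xb - ereal (blinfun_apply xs (x - xb)) \<ge> 0}"

text \<open>Uniform infimum \<Lambda>_X({f1,f2}) = lim_{\<delta>\<down>0} inf{f1 x + f2 u : ||x-u|| < \<delta>}.
  The inner infimum is nonincreasing in \<delta>, so the limit as \<delta>\<down>0 is the supremum over \<delta>>0.\<close>
definition uniform_inf :: "('a::real_normed_vector \<Rightarrow> ereal) \<Rightarrow> ('a \<Rightarrow> ereal) \<Rightarrow> ereal" where
  "uniform_inf f1 f2 = (SUP \<delta>\<in>{0<..}. INF p\<in>{(x, u). norm (x - u) < \<delta>}. f1 (fst p) + f2 (snd p))"

end

theory Submission
  imports Defs
begin

(* If x* is a subgradient of f1 at xb and -x* one of f2, adding the two subgradient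
   inequalities gives f1 x + f2 u \<ge> f1 xb + f2 xb - ||x*|| ||x - u||. Hence the infimum over
   ||x - u|| < \<delta> is at least (f1 + f2) xb - ||x*|| \<delta>, and letting \<delta> go to 0 bounds the uniform
   infimum below by (f1 + f2) xb \<ge> inf (f1 + f2). *)

lemma fenchel_subdiff_minorant:
  assumes "s \<in> fenchel_subdiff f xb" and "f xb = ereal a"
  shows "ereal (a + s (x - xb)) \<le> f x"
proof -
  have "f x - ereal a - ereal (s (x - xb)) \<ge> 0"
    using assms unfolding fenchel_subdiff_def by auto
  then show ?thesis by (cases "f x") auto
qed

lemma opposite_subgradients_sum_minorant:
  fixes f1 f2 :: "'a::real_normed_vector \<Rightarrow> ereal"
  assumes "s \<in> fenchel_subdiff f1 xb" and "- s \<in> fenchel_subdiff f2 xb"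
    and "f1 xb = ereal a" and "f2 xb = ereal b"
  shows "ereal (a + b - norm s * norm (x - u)) \<le> f1 x + f2 u"
proof -
  have "s (x - xb) + (- s) (u - xb) = s (x - u)"
    by (simp add: uminus_blinfun.rep_eq flip: blinfun.diff_right)
  moreover have "- (norm s * norm (x - u)) \<le> s (x - u)"
    using norm_blinfun[of s "x - u"] by (simp add: abs_le_iff)
  ultimately have "a + b - norm s * norm (x - u) \<le> (a + s (x - xb)) + (b + (- s) (u - xb))"
    by linarith
  then have "ereal (a + b - norm s * norm (x - u))
      \<le> ereal (a + s (x - xb)) + ereal (b + (- s) (u - xb))"
    by simp
  also have "\<dots> \<le> f1 x + f2 u"
    using assms by (intro add_mono fenchel_subdiff_minorant)
  finally show ?thesis .
qed

lemma uniform_inf_lower_bound: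
  fixes f1 f2 :: "'a::real_normed_vector \<Rightarrow> ereal"
  assumes "K \<ge> 0" and minorant: "\<And>x u. ereal (c - K * norm (x - u)) \<le> f1 x + f2 u"
  shows "ereal c \<le> uniform_inf f1 f2"
proof (rule ereal_le_epsilon2)
  fix e :: real
  assume "e > 0"
  define \<delta> where "\<delta> = e / (K + 1)"
  have "\<delta> > 0" using \<open>e > 0\<close> \<open>K \<ge> 0\<close> by (simp add: \<delta>_def)
  have "ereal (c - e) \<le> f1 x + f2 u" if "norm (x - u) < \<delta>" for x u
  proof -
    have "K * norm (x - u) \<le> (K + 1) * \<delta>"
      using that \<open>K \<ge> 0\<close> by (intro mult_mono) auto
    then have "c - e \<le> c - K * norm (x - u)"
      using \<open>K \<ge> 0\<close> by (simp add: \<delta>_def)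
    then show ?thesis using minorant[of x u] by (metis ereal_less_eq(3) order_trans)
  qed
  then have "ereal (c - e) \<le> (INF p\<in>{(x, u). norm (x - u) < \<delta>}. f1 (fst p) + f2 (snd p))"
    by (intro INF_greatest) auto
  also have "\<dots> \<le> uniform_inf f1 f2"
    unfolding uniform_inf_def using \<open>\<delta> > 0\<close> by (intro SUP_upper) auto
  finally have "ereal (c - e) + ereal e \<le> uniform_inf f1 f2 + ereal e"
    by (rule add_right_mono)
  then show "ereal c \<le> uniform_inf f1 f2 + ereal e" by simp
qed

theorem proposition2p4:
  fixes f1 f2 :: "'a::banach \<Rightarrow> ereal" and xb :: 'a
  assumes f1_proper: "\<forall>x. f1 x \<noteq> -\<infinity>" and f2_proper: "\<forall>x. f2 x \<noteq> -\<infinity>"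
    and f1_convex: "ext_convex f1" and f2_convex: "ext_convex f2"
    and xb_dom: "xb \<in> efun_dom f1 \<inter> efun_dom f2"
    and zero_in: "\<exists>xs1\<in>fenchel_subdiff f1 xb. \<exists>xs2\<in>fenchel_subdiff f2 xb. xs1 + xs2 = 0"
  shows "(INF x. f1 x + f2 x) \<le> uniform_inf f1 f2"
proof -
  obtain s where s1: "s \<in> fenchel_subdiff f1 xb" and s2: "- s \<in> fenchel_subdiff f2 xb"
    using zero_in by (metis add.inverse_unique)
  obtain a b where a: "f1 xb = ereal a" and b: "f2 xb = ereal b"
    using xb_dom f1_proper f2_proper unfolding efun_dom_def
    by (metis Int_iff less_ereal.simps(2) mem_Collect_eq real_of_ereal.elims)
  have "(INF x. f1 x + f2 x) \<le> f1 xb + f2 xb" by (rule INF_lower) simp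
  also have "\<dots> = ereal (a + b)" using a b by simp
  also have "\<dots> \<le> uniform_inf f1 f2"
    using opposite_subgradients_sum_minorant[OF s1 s2 a b]
    by (intro uniform_inf_lower_bound[of "norm s"]) auto
  finally show ?thesis .
qed

end
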